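(* Let $\mathfrak{g}$ be a semisimple Lie algebra, $A=\mathbb{C}\oplus A_+$ with $A_+=\bigoplus_{i>0}A_i$ a $\mathbb{Z}_{\ge0}$-graded commutative unital algebra, and let $x,y:A_+\to\mathbb{C}$ be two linearly independent linear maps vanishing on $A_+^2$. Let $\{e_i\}$ be an orthonormal basis of $\mathfrak{g}$ for the Killing form and $\{e^i\}$ the dual basis of $\mathfrak{g}^*$. For $u\in\mathfrak{g}^*$ and $z:A_+\to\mathbb{C}$ let $uz$ denote the linear functional $a\otimes b\mapsto u(a)z(b)$ on $\mathfrak{g}\otimes A_+$. Then $$\varphi_{x,y}=\sum_{i=1}^{\dim\mathfrak{g}}e^ix\wedge e^iy\in\mathrm{Hom}(\Lambda^2(\mathfrak{g}\otimes A_+),\mathbb{C})$$ is a cocycle in the relative Chevalley–Eilenberg complex $C^\bullet(\mathfrak{g}\otimes A,\mathfrak{g};\mathbb{C})=\mathrm{Hom}_{\mathfrak{g}}(\Lambda^\bullet(\mathfrak{g}\otimes A_+),\mathbb{C})$ whose class in $H^2(\mathfrak{g}\otimes A,\mathfrak{g};\mathbb{C})$ is nonzero.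
   Context: $\mathfrak{g}\otimes A$ is the current Lie algebra with bracket $[a\otimes u,b\otimes v]=[a,b]\otimes uv$; it contains $\mathfrak g=\mathfrak g\otimes 1$, and $(\mathfrak g\otimes A)/\mathfrak g\cong\mathfrak g\otimes A_+$ as $\mathfrak g$-modules. $H^\bullet(\mathfrak{g}\otimes A,\mathfrak{g};\mathbb{C})$ is relative Lie algebra cohomology with trivial coefficients. *)

theory Defs
  imports Complex_Main
begin

definition lie_algebra :: "(complex \<Rightarrow> 'g::ab_group_add \<Rightarrow> 'g) \<Rightarrow> ('g \<Rightarrow> 'g \<Rightarrow> 'g) \<Rightarrow> bool" where
  "lie_algebra sG br \<longleftrightarrow>
     vector_space sG \<and>
     (\<forall>a. Vector_Spaces.linear sG sG (br a)) \<and>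
     (\<forall>b. Vector_Spaces.linear sG sG (\<lambda>a. br a b)) \<and>
     (\<forall>a. br a a = 0) \<and>
     (\<forall>a b c. br a (br b c) + br b (br c a) + br c (br a b) = 0)"

definition fin_dim :: "(complex \<Rightarrow> 'g::ab_group_add \<Rightarrow> 'g) \<Rightarrow> bool" where
  "fin_dim sG \<longleftrightarrow> (\<exists>B. finite B \<and> module.span sG B = UNIV)"

definition lie_ideal :: "(complex \<Rightarrow> 'g::ab_group_add \<Rightarrow> 'g) \<Rightarrow> ('g \<Rightarrow> 'g \<Rightarrow> 'g) \<Rightarrow> 'g set \<Rightarrow> bool" where
  "lie_ideal sG br I \<longleftrightarrow> module.subspace sG I \<and> (\<forall>a b. b \<in> I \<longrightarrow> br a b \<in> I)"

primrec derived :: "(complex \<Rightarrow> 'g::ab_group_add \<Rightarrow> 'g) \<Rightarrow> ('g \<Rightarrow> 'g \<Rightarrow> 'g) \<Rightarrow> 'g set \<Rightarrow> nat \<Rightarrow> 'g set" where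
  "derived sG br I 0 = I"
| "derived sG br I (Suc k) =
     module.span sG {br a b | a b. a \<in> derived sG br I k \<and> b \<in> derived sG br I k}"

definition solvable_ideal :: "(complex \<Rightarrow> 'g::ab_group_add \<Rightarrow> 'g) \<Rightarrow> ('g \<Rightarrow> 'g \<Rightarrow> 'g) \<Rightarrow> 'g set \<Rightarrow> bool" where
  "solvable_ideal sG br I \<longleftrightarrow> lie_ideal sG br I \<and> (\<exists>k. derived sG br I k = {0})"

definition semisimple :: "(complex \<Rightarrow> 'g::ab_group_add \<Rightarrow> 'g) \<Rightarrow> ('g \<Rightarrow> 'g \<Rightarrow> 'g) \<Rightarrow> bool" where
  "semisimple sG br \<longleftrightarrow> lie_algebra sG br \<and> fin_dim sG \<and> (UNIV :: 'g set) \<noteq> {0} \<and>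
     (\<forall>I. solvable_ideal sG br I \<longrightarrow> I = {0})"

text \<open>Trace of an endomorphism of a finite-dimensional space, computed in a
(chosen) basis; basis independent.\<close>
definition lin_trace :: "(complex \<Rightarrow> 'g::ab_group_add \<Rightarrow> 'g) \<Rightarrow> ('g \<Rightarrow> 'g) \<Rightarrow> complex" where
  "lin_trace sG f =
    (let B = (SOME B. \<not> module.dependent sG B \<and> module.span sG B = UNIV)
     in \<Sum>b\<in>B. module.representation sG B (f b) b)"

definition killing :: "(complex \<Rightarrow> 'g::ab_group_add \<Rightarrow> 'g) \<Rightarrow> ('g \<Rightarrow> 'g \<Rightarrow> 'g) \<Rightarrow> 'g \<Rightarrow> 'g \<Rightarrow> complex" where
  "killing sG br a b = lin_trace sG (\<lambda>v. br a (br b v))"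

definition graded_comm_algebra :: "(complex \<Rightarrow> 'a::comm_ring_1 \<Rightarrow> 'a) \<Rightarrow> (nat \<Rightarrow> 'a set) \<Rightarrow> bool" where
  "graded_comm_algebra sA Agr \<longleftrightarrow>
     vector_space sA \<and>
     (\<forall>c p q. sA c (p * q) = sA c p * q) \<and>
     (\<forall>i. module.subspace sA (Agr i)) \<and>
     (\<forall>p. \<exists>!f. finite {i. f i \<noteq> 0} \<and> (\<forall>i. f i \<in> Agr i) \<and> p = (\<Sum>i\<in>{i. f i \<noteq> 0}. f i)) \<and>
     (\<forall>i j p q. p \<in> Agr i \<longrightarrow> q \<in> Agr j \<longrightarrow> p * q \<in> Agr (i + j)) \<and>
     Agr 0 = range (\<lambda>c. sA c 1)"

definition aug_ideal :: "(complex \<Rightarrow> 'a::comm_ring_1 \<Rightarrow> 'a) \<Rightarrow> (nat \<Rightarrow> 'a set) \<Rightarrow> 'a set" where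
  "aug_ideal sA Agr = module.span sA (\<Union>i\<in>{0<..}. Agr i)"

definition linear_on :: "(complex \<Rightarrow> 'a::ab_group_add \<Rightarrow> 'a) \<Rightarrow> 'a set \<Rightarrow> ('a \<Rightarrow> complex) \<Rightarrow> bool" where
  "linear_on sA S x \<longleftrightarrow> (\<forall>p\<in>S. \<forall>q\<in>S. \<forall>c. x (sA c p + q) = c * x p + x q)"

text \<open>An n-cochain on g \<otimes> A_+ is represented by its values on n-tuples of
pure tensors a \<otimes> u (a list of pairs (a,u), u \<in> A_+); by the universal property
of the tensor product, multilinear maps on g \<otimes> A_+ correspond to maps which are
linear in each a_k and each u_k separately.  Only the values on arguments in
A_+ are meaningful.\<close>

definition args_ok :: "'a set \<Rightarrow> nat \<Rightarrow> ('g \<times> 'a) list \<Rightarrow> bool" where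
  "args_ok S n zs \<longleftrightarrow> length zs = n \<and> (\<forall>z\<in>set zs. snd z \<in> S)"

text \<open>Elements of Hom_g(\<Lambda>^n(g \<otimes> A_+), C): multilinear, alternating
(antisymmetric under transpositions; equivalent over C) and g-invariant.\<close>
definition rel_cochain ::
  "(complex \<Rightarrow> 'g::ab_group_add \<Rightarrow> 'g) \<Rightarrow> ('g \<Rightarrow> 'g \<Rightarrow> 'g) \<Rightarrow>
   (complex \<Rightarrow> 'a::comm_ring_1 \<Rightarrow> 'a) \<Rightarrow> 'a set \<Rightarrow> nat \<Rightarrow> (('g \<times> 'a) list \<Rightarrow> complex) \<Rightarrow> bool" where
  "rel_cochain sG br sA S n \<omega> \<longleftrightarrow>
     (\<forall>zs k. args_ok S n zs \<longrightarrow> k < n \<longrightarrow>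
        (\<forall>c a b. \<omega> (zs[k := (sG c a + b, snd (zs!k))])
                  = c * \<omega> (zs[k := (a, snd (zs!k))]) + \<omega> (zs[k := (b, snd (zs!k))])) \<and>
        (\<forall>c u v. u \<in> S \<longrightarrow> v \<in> S \<longrightarrow> \<omega> (zs[k := (fst (zs!k), sA c u + v)])
                  = c * \<omega> (zs[k := (fst (zs!k), u)]) + \<omega> (zs[k := (fst (zs!k), v)]))) \<and>
     (\<forall>zs i j. args_ok S n zs \<longrightarrow> i < n \<longrightarrow> j < n \<longrightarrow> i \<noteq> j \<longrightarrow>
        \<omega> (zs[i := zs!j, j := zs!i]) = - \<omega> zs) \<and>
     (\<forall>zs c. args_ok S n zs \<longrightarrow>
        (\<Sum>k<n. \<omega> (zs[k := (br c (fst (zs!k)), snd (zs!k))])) = 0)"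

definition del2 :: "nat \<Rightarrow> nat \<Rightarrow> 'b list \<Rightarrow> 'b list" where
  "del2 i j zs = map (\<lambda>k. zs!k) (filter (\<lambda>k. k \<noteq> i \<and> k \<noteq> j) [0..<length zs])"

text \<open>Chevalley--Eilenberg differential with trivial coefficients, evaluated on
pure tensors, using [a \<otimes> u, b \<otimes> v] = [a,b] \<otimes> uv:
 d\<omega>(z_0,...,z_n) = \<Sum>_{i<j} (-1)^(i+j) \<omega>([z_i,z_j], z_0,..^i..^j..,z_n).\<close>
definition ce_diff :: "('g \<Rightarrow> 'g \<Rightarrow> 'g) \<Rightarrow> (('g \<times> 'a::comm_ring_1) list \<Rightarrow> complex) \<Rightarrow> ('g \<times> 'a) list \<Rightarrow> complex" where
  "ce_diff br \<omega> zs =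
     (\<Sum>j<length zs. \<Sum>i<j. (-1::complex) ^ (i + j) *
        \<omega> ((br (fst (zs!i)) (fst (zs!j)), snd (zs!i) * snd (zs!j)) # del2 i j zs))"

definition tens_fun :: "('g \<Rightarrow> complex) \<Rightarrow> ('a \<Rightarrow> complex) \<Rightarrow> ('g \<times> 'a) \<Rightarrow> complex" where
  "tens_fun u z p = u (fst p) * z (snd p)"

definition wedge1 :: "(('g \<times> 'a) \<Rightarrow> complex) \<Rightarrow> (('g \<times> 'a) \<Rightarrow> complex) \<Rightarrow> ('g \<times> 'a) list \<Rightarrow> complex" where
  "wedge1 \<alpha> \<beta> zs = \<alpha> (zs!0) * \<beta> (zs!1) - \<alpha> (zs!1) * \<beta> (zs!0)"

definition phi_xy :: "nat \<Rightarrow> (nat \<Rightarrow> 'g \<Rightarrow> complex) \<Rightarrow> ('a \<Rightarrow> complex) \<Rightarrow> ('a \<Rightarrow> complex) \<Rightarrow> ('g \<times> 'a) list \<Rightarrow> complex" where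
  "phi_xy n estar x y zs = (\<Sum>i<n. wedge1 (tens_fun (estar i) x) (tens_fun (estar i) y) zs)"

end

theory Submission imports Defs begin

text \<open>Because the dual basis is orthonormal for the Killing form K, the cochain \<phi>_{x,y}
takes the value K(a,b) (x(u) y(v) - x(v) y(u)) on the pair (a \<otimes> u, b \<otimes> v). Symmetry and
invariance of K make it an alternating g-invariant cochain, and every term of its differential
evaluates x or y on a product in A_+^2, so it is a cocycle. A coboundary d\<psi> takes the value
-\<psi>([a,b] \<otimes> uv) on such a pair and hence vanishes whenever a = b, whereas
\<phi>_{x,y}(e_1 \<otimes> p, e_1 \<otimes> q) = x(p) y(q) - x(q) y(p) is nonzero for suitable p, q because x
and y are linearly independent.\<close>

locale fd_vector_space = vector_space sG for sG :: "complex \<Rightarrow> 'g::ab_group_add \<Rightarrow> 'g" +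
  assumes fin_dim: "fin_dim sG"
begin

definition trace_basis :: "'g set" where
  "trace_basis = (SOME B. independent B \<and> span B = UNIV)"

lemma trace_basis: "independent trace_basis" "span trace_basis = UNIV" "finite trace_basis"
proof -
  obtain B0 where B0: "finite B0" "span B0 = UNIV" using fin_dim unfolding fin_dim_def by blast
  obtain B where "B \<subseteq> B0" "independent B" "B0 \<subseteq> span B"
    using maximal_independent_subset[of B0] by blast
  then have "independent B \<and> span B = UNIV"
    using B0(2) span_minimal[of B0 "span B"] by auto
  then have TB: "independent trace_basis \<and> span trace_basis = UNIV"
    unfolding trace_basis_def by (rule someI)
  then show "independent trace_basis" "span trace_basis = UNIV" by auto
  show "finite trace_basis" using independent_span_bound[of B0 trace_basis] B0 TB by auto
qed

lemma lin_trace_eq: "lin_trace sG f = (\<Sum>b\<in>trace_basis. representation trace_basis (f b) b)"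
  unfolding lin_trace_def Let_def trace_basis_def by simp

lemma lin_trace_scale_add:
  "lin_trace sG (\<lambda>v. sG c (f v) + g v) = c * lin_trace sG f + lin_trace sG g"
  using trace_basis
  by (simp add: lin_trace_eq representation_add representation_scale sum.distrib sum_distrib_left)

lemma lin_trace_diff: "lin_trace sG (\<lambda>v. f v - g v) = lin_trace sG f - lin_trace sG g"
  using trace_basis by (simp add: lin_trace_eq representation_diff sum_subtractf)

lemma representation_linear_image:
  assumes B: "independent B" "span B = UNIV" "finite B" and f: "Vector_Spaces.linear sG sG f"
  shows "representation B (f w) b = (\<Sum>b'\<in>B. representation B w b' * representation B (f b') b)"
proof -
  interpret f: Vector_Spaces.linear sG sG f by fact
  have "f w = f (\<Sum>b'\<in>B. sG (representation B w b') b')"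
    using sum_representation_eq[of B w B] B by simp
  also have "\<dots> = (\<Sum>b'\<in>B. sG (representation B w b') (f b'))"
    by (simp add: f.sum f.scale)
  finally show ?thesis using B by (simp add: representation_sum representation_scale)
qed

lemma lin_trace_comp_commute:
  assumes f: "Vector_Spaces.linear sG sG f" and g: "Vector_Spaces.linear sG sG g"
  shows "lin_trace sG (\<lambda>v. f (g v)) = lin_trace sG (\<lambda>v. g (f v))"
proof -
  let ?r = "representation trace_basis"
  have "lin_trace sG (\<lambda>v. f (g v)) = (\<Sum>b\<in>trace_basis. \<Sum>b'\<in>trace_basis. ?r (g b) b' * ?r (f b') b)"
    unfolding lin_trace_eq by (intro sum.cong refl representation_linear_image[OF trace_basis f])
  also have "\<dots> = (\<Sum>b'\<in>trace_basis. \<Sum>b\<in>trace_basis. ?r (f b') b * ?r (g b) b')"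
    by (subst sum.swap) (simp add: mult.commute)
  also have "\<dots> = lin_trace sG (\<lambda>v. g (f v))"
    unfolding lin_trace_eq by (intro sum.cong refl representation_linear_image[OF trace_basis g, symmetric])
  finally show ?thesis .
qed

end

lemma vector_space_complex_mult: "vector_space ((*) :: complex \<Rightarrow> complex \<Rightarrow> complex)"
  by unfold_locales (simp_all add: algebra_simps)

locale fd_lie_algebra = fd_vector_space sG for sG :: "complex \<Rightarrow> 'g::ab_group_add \<Rightarrow> 'g" +
  fixes br :: "'g \<Rightarrow> 'g \<Rightarrow> 'g"
  assumes bracket_linear_right: "Vector_Spaces.linear sG sG (br a)"
    and bracket_linear_left: "Vector_Spaces.linear sG sG (\<lambda>a. br a b)"
    and bracket_self: "br a a = 0"
    and jacobi: "br a (br b c) + br b (br c a) + br c (br a b) = 0"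
begin

lemma bracket_scale_add_right: "br a (sG c u + v) = sG c (br a u) + br a v"
proof -
  interpret l: Vector_Spaces.linear sG sG "br a" by (rule bracket_linear_right)
  show ?thesis by (simp add: l.add l.scale)
qed

lemma bracket_scale_add_left: "br (sG c u + v) b = sG c (br u b) + br v b"
proof -
  interpret l: Vector_Spaces.linear sG sG "\<lambda>a. br a b" by (rule bracket_linear_left)
  show ?thesis using l.add l.scale by simp
qed

lemma bracket_diff_right: "br a (u - v) = br a u - br a v"
proof -
  interpret l: Vector_Spaces.linear sG sG "br a" by (rule bracket_linear_right)
  show ?thesis by (rule l.diff)
qed

lemma bracket_zero_right: "br a 0 = 0"
  using bracket_diff_right[of a 0 0] by simp

lemma bracket_anticomm: "br a b = - br b a"
proof -
  have "0 = br (a + b) (a + b)" by (rule bracket_self[symmetric])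
  also have "\<dots> = br a a + br a b + (br b a + br b b)"
    using bracket_scale_add_left[of 1 a b "a + b"] bracket_scale_add_right[of _ 1] by simp
  finally show ?thesis by (simp add: bracket_self eq_neg_iff_add_eq_0)
qed

lemma bracket_derivation: "br (br c a) v = br c (br a v) - br a (br c v)"
  using jacobi[of c a v] bracket_anticomm[of v "br c a"] bracket_anticomm[of v c]
    bracket_diff_right[of a 0 "br c v"]
  by (simp add: bracket_zero_right algebra_simps)

lemma killing_scale_add_left:
  "killing sG br (sG c a + a') b = c * killing sG br a b + killing sG br a' b"
  unfolding killing_def by (simp add: bracket_scale_add_left lin_trace_scale_add)

lemma killing_sym: "killing sG br a b = killing sG br b a"
  unfolding killing_def by (rule lin_trace_comp_commute[OF bracket_linear_right bracket_linear_right])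

lemma killing_linear_left: "Vector_Spaces.linear sG (*) (\<lambda>a. killing sG br a b)"
proof -
  have add: "killing sG br (a + a') b = killing sG br a b + killing sG br a' b" for a a'
    using killing_scale_add_left[of 1 a a' b] by simp
  have scale: "killing sG br (sG c a) b = c * killing sG br a b" for c a
    using killing_scale_add_left[of c a 0 b] add[of 0 0] by simp
  show ?thesis
    by (simp add: Vector_Spaces.linear_iff vector_space_complex_mult vector_space_axioms add scale)
qed

lemma killing_invariant: "killing sG br (br c a) b + killing sG br a (br c b) = 0"
proof -
  have ab_linear: "Vector_Spaces.linear sG sG (\<lambda>v. br a (br b v))"
    using Vector_Spaces.linear_compose[OF bracket_linear_right bracket_linear_right]
    by (simp add: o_def)
  have "killing sG br (br c a) b + killing sG br a (br c b)
      = lin_trace sG (\<lambda>v. br c (br a (br b v))) - lin_trace sG (\<lambda>v. br a (br b (br c v)))"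
    unfolding killing_def by (simp add: bracket_derivation bracket_diff_right lin_trace_diff)
  also have "\<dots> = 0"
    using lin_trace_comp_commute[OF bracket_linear_right ab_linear] by simp
  finally show ?thesis .
qed

end

lemma fd_lie_algebraI:
  assumes "lie_algebra sG br" "fin_dim sG"
  shows "fd_lie_algebra sG br"
  using assms unfolding lie_algebra_def
  by (intro fd_lie_algebra.intro fd_vector_space.intro fd_lie_algebra_axioms.intro
      fd_vector_space_axioms.intro) auto

locale dual_basis = vector_space sG for sG :: "complex \<Rightarrow> 'g::ab_group_add \<Rightarrow> 'g" +
  fixes n :: nat and e :: "nat \<Rightarrow> 'g" and estar :: "nat \<Rightarrow> 'g \<Rightarrow> complex"
  assumes basis_inj: "inj_on e {..<n}"
    and basis_spans: "span (e ` {..<n}) = UNIV"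
    and dual_linear: "i < n \<Longrightarrow> Vector_Spaces.linear sG (*) (estar i)"
    and dual_on_basis: "i < n \<Longrightarrow> j < n \<Longrightarrow> estar i (e j) = (if i = j then 1 else 0)"
begin

sublocale fd_vector_space
  using basis_spans by unfold_locales (auto simp: fin_dim_def)

lemma dual_basis_expansion: "a = (\<Sum>i<n. sG (estar i a) (e i))"
proof -
  obtain u where u: "a = (\<Sum>v\<in>e ` {..<n}. sG (u v) v)"
    using span_finite[of "e ` {..<n}"] basis_spans by blast
  then have a: "a = (\<Sum>i<n. sG (u (e i)) (e i))"
    using sum.reindex[OF basis_inj, of "\<lambda>v. sG (u v) v"] by simp
  have "estar j a = u (e j)" if j: "j < n" for j
  proof -
    interpret l: Vector_Spaces.linear sG "(*)" "estar j" using dual_linear j .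
    have "estar j a = (\<Sum>i<n. u (e i) * estar j (e i))"
      by (subst a) (simp add: l.sum l.scale)
    also have "\<dots> = (\<Sum>i<n. if i = j then u (e j) else 0)"
      using j by (intro sum.cong) (auto simp: dual_on_basis)
    finally show ?thesis using j by simp
  qed
  then show ?thesis using a by simp
qed

lemma dual_basis_nonempty: "UNIV \<noteq> {0::'g} \<Longrightarrow> 0 < n"
  using basis_spans by (cases n) auto

end

lemma span_mult_closed:
  fixes sA :: "complex \<Rightarrow> 'a::comm_ring_1 \<Rightarrow> 'a"
  assumes "vector_space sA" and scale_mult: "\<forall>c p q. sA c (p * q) = sA c p * q"
    and G_mult: "\<And>p q. p \<in> G \<Longrightarrow> q \<in> G \<Longrightarrow> p * q \<in> G"
    and p: "p \<in> module.span sA G" and q: "q \<in> module.span sA G"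
  shows "p * q \<in> module.span sA G"
proof -
  interpret vector_space sA by fact
  have scale_mult_right: "p * sA c q = sA c (p * q)" for p q c
    using scale_mult by (metis mult.commute)
  have G_span: "p * q \<in> span G" if "p \<in> G" "q \<in> span G" for p q
    using that(2)
  proof (induct rule: span_induct)
    case base
    show ?case unfolding subspace_def
      by (simp add: scale_mult_right distrib_left span_zero span_add span_scale)
  next
    case (step q)
    show ?case by (rule span_base[OF G_mult[OF that(1) step]])
  qed
  from p show ?thesis
  proof (induct rule: span_induct)
    case base
    show ?case unfolding subspace_def
      by (simp add: scale_mult[rule_format, symmetric] distrib_right span_zero span_add span_scale)
  next
    case (step p)
    show ?case by (rule G_span[OF step q])
  qed
qed

lemma graded_comm_algebraD:
  assumes "graded_comm_algebra sA Agr"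
  shows "vector_space sA" "\<forall>c p q. sA c (p * q) = sA c p * q"
    "\<forall>i j p q. p \<in> Agr i \<longrightarrow> q \<in> Agr j \<longrightarrow> p * q \<in> Agr (i + j)"
  using assms unfolding graded_comm_algebra_def by - (elim conjE, assumption)+

lemma aug_ideal_mult_closed:
  assumes "graded_comm_algebra sA Agr" "p \<in> aug_ideal sA Agr" "q \<in> aug_ideal sA Agr"
  shows "p * q \<in> aug_ideal sA Agr"
proof -
  note gr = graded_comm_algebraD[OF assms(1)]
  have "p * q \<in> (\<Union>i\<in>{0<..}. Agr i)"
    if pq: "p \<in> (\<Union>i\<in>{0<..}. Agr i)" "q \<in> (\<Union>i\<in>{0<..}. Agr i)" for p q
  proof -
    obtain i j where i: "0 < i" "p \<in> Agr i" and j: "q \<in> Agr j" using pq by auto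
    have "p * q \<in> Agr (i + j)" using gr(3) i(2) j by blast
    then show ?thesis using i(1) by auto
  qed
  from span_mult_closed[OF gr(1,2) this assms(2,3)[unfolded aug_ideal_def]] show ?thesis
    unfolding aug_ideal_def .
qed

definition wedge_pair :: "('a \<Rightarrow> complex) \<Rightarrow> ('a \<Rightarrow> complex) \<Rightarrow> 'a \<Rightarrow> 'a \<Rightarrow> complex" where
  "wedge_pair x y u v = x u * y v - x v * y u"

lemma wedge_pair_alt: "wedge_pair x y v u = - wedge_pair x y u v"
  by (simp add: wedge_pair_def)

lemma wedge_pair_scale_add_left:
  assumes "linear_on sA S x" "linear_on sA S y" "u \<in> S" "v \<in> S"
  shows "wedge_pair x y (sA c u + v) w = c * wedge_pair x y u w + wedge_pair x y v w"
proof -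
  have "x (sA c u + v) = c * x u + x v" "y (sA c u + v) = c * y u + y v"
    using assms unfolding linear_on_def by blast+
  then show ?thesis by (simp add: wedge_pair_def algebra_simps)
qed

lemma wedge_pair_mult_left:
  assumes "\<forall>p\<in>S. \<forall>q\<in>S. x (p * q) = 0" "\<forall>p\<in>S. \<forall>q\<in>S. y (p * q) = 0" "u \<in> S" "v \<in> S"
  shows "wedge_pair x y (u * v) w = 0"
  using assms by (simp add: wedge_pair_def)

lemma wedge_pair_nonzero:
  assumes indep: "\<forall>c d. (\<forall>p\<in>S. c * x p + d * y p = 0) \<longrightarrow> c = 0 \<and> d = 0"
  obtains p q where "p \<in> S" "q \<in> S" "wedge_pair x y p q \<noteq> 0"
proof -
  obtain p where p: "p \<in> S" "x p \<noteq> 0" using indep[rule_format, of 1 0] by auto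
  have "\<exists>q\<in>S. y p * x q + (- x p) * y q \<noteq> 0"
    using indep[rule_format, of "y p" "- x p"] p(2) by auto
  then show ?thesis
    using that p(1) by (auto simp: wedge_pair_def algebra_simps)
qed

definition tensor_cochain ::
  "('g \<Rightarrow> 'g \<Rightarrow> complex) \<Rightarrow> ('a \<Rightarrow> 'a \<Rightarrow> complex) \<Rightarrow> ('g \<times> 'a) list \<Rightarrow> complex" where
  "tensor_cochain B D zs = B (fst (zs!0)) (fst (zs!1)) * D (snd (zs!0)) (snd (zs!1))"

lemma args_ok_2E:
  assumes "args_ok S 2 zs"
  obtains a0 u0 a1 u1 where "zs = [(a0, u0), (a1, u1)]" "u0 \<in> S" "u1 \<in> S"
  using assms unfolding args_ok_def by (auto simp: numeral_2_eq_2 length_Suc_conv)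

lemma rel_cochain_tensor_cochain:
  fixes B :: "'g::ab_group_add \<Rightarrow> 'g \<Rightarrow> complex" and D :: "'a::comm_ring_1 \<Rightarrow> 'a \<Rightarrow> complex"
  assumes B_lin: "\<And>c a a' b. B (sG c a + a') b = c * B a b + B a' b"
    and B_sym: "\<And>a b. B a b = B b a"
    and B_inv: "\<And>c a b. B (br c a) b + B a (br c b) = 0"
    and D_lin: "\<And>c u v w. u \<in> S \<Longrightarrow> v \<in> S \<Longrightarrow> D (sA c u + v) w = c * D u w + D v w"
    and D_alt: "\<And>u v. D v u = - D u v"
  shows "rel_cochain sG br sA S 2 (tensor_cochain B D)"
proof -
  have B_lin': "B b (sG c a + a') = c * B b a + B b a'" for c a a' b
    using B_lin[of c a a' b] B_sym by metis
  have D_lin': "D w (sA c u + v) = c * D w u + D w v" if "u \<in> S" "v \<in> S" for c u v w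
    using D_lin[OF that, of c w] D_alt[of w "sA c u + v"] D_alt[of w u] D_alt[of w v] by simp
  have k2: "k = 0 \<or> k = 1" if "k < (2::nat)" for k
    using that by auto
  show ?thesis
    unfolding rel_cochain_def
  proof (intro conjI allI impI)
    fix zs :: "('g \<times> 'a) list" and k :: nat and c a b
    assume zs: "args_ok S 2 zs" and k: "k < 2"
    obtain a0 u0 a1 u1 where "zs = [(a0, u0), (a1, u1)]" using zs by (rule args_ok_2E)
    with k2[OF k] show "tensor_cochain B D (zs[k := (sG c a + b, snd (zs!k))]) =
        c * tensor_cochain B D (zs[k := (a, snd (zs!k))]) + tensor_cochain B D (zs[k := (b, snd (zs!k))])"
      by (auto simp: tensor_cochain_def B_lin B_lin' distrib_right mult.assoc)
  next
    fix zs :: "('g \<times> 'a) list" and k :: nat and c u v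
    assume zs: "args_ok S 2 zs" and k: "k < 2" and uv: "u \<in> S" "v \<in> S"
    obtain a0 u0 a1 u1 where "zs = [(a0, u0), (a1, u1)]" using zs by (rule args_ok_2E)
    with k2[OF k] show "tensor_cochain B D (zs[k := (fst (zs!k), sA c u + v)]) =
        c * tensor_cochain B D (zs[k := (fst (zs!k), u)]) + tensor_cochain B D (zs[k := (fst (zs!k), v)])"
      by (auto simp: tensor_cochain_def D_lin[OF uv] D_lin'[OF uv] distrib_left mult.left_commute)
  next
    fix zs :: "('g \<times> 'a) list" and i j :: nat
    assume zs: "args_ok S 2 zs" and ij: "i < 2" "j < 2" "i \<noteq> j"
    obtain a0 u0 a1 u1 where zs_eq: "zs = [(a0, u0), (a1, u1)]" using zs by (rule args_ok_2E)
    have swap: "tensor_cochain B D [(a1, u1), (a0, u0)] = - tensor_cochain B D [(a0, u0), (a1, u1)]"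
      unfolding tensor_cochain_def using B_sym[of a1 a0] D_alt[of u0 u1] by simp
    have "i = 0 \<and> j = 1 \<or> i = 1 \<and> j = 0" using ij by auto
    then show "tensor_cochain B D (zs[i := zs!j, j := zs!i]) = - tensor_cochain B D zs"
      using swap zs_eq by auto
  next
    fix zs :: "('g \<times> 'a) list" and c
    assume zs: "args_ok S 2 zs"
    obtain a0 u0 a1 u1 where "zs = [(a0, u0), (a1, u1)]" using zs by (rule args_ok_2E)
    then show "(\<Sum>k<2. tensor_cochain B D (zs[k := (br c (fst (zs!k)), snd (zs!k))])) = 0"
      using B_inv[of c a0 a1]
      by (simp add: tensor_cochain_def numeral_2_eq_2 distrib_right[symmetric])
  qed
qed

lemma ce_diff_tensor_cochain_eq_0:
  assumes D_prod: "\<And>u v w. u \<in> S \<Longrightarrow> v \<in> S \<Longrightarrow> D (u * v) w = 0"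
    and zs: "args_ok S m zs"
  shows "ce_diff br (tensor_cochain B D) zs = 0"
  unfolding ce_diff_def
proof (intro sum.neutral ballI)
  fix i j assume "j \<in> {..<length zs}" "i \<in> {..<j}"
  then have "snd (zs!i) \<in> S" "snd (zs!j) \<in> S"
    using zs nth_mem unfolding args_ok_def by auto
  then show "(-1) ^ (i + j) * tensor_cochain B D
      ((br (fst (zs!i)) (fst (zs!j)), snd (zs!i) * snd (zs!j)) # del2 i j zs) = 0"
    by (simp add: tensor_cochain_def D_prod)
qed

lemma rel_cochain_1_zero_slot:
  assumes "vector_space sG" "rel_cochain sG br sA S 1 \<psi>" "u \<in> S"
  shows "\<psi> [(0, u)] = 0"
proof -
  interpret vector_space sG by fact
  have ok: "args_ok S 1 [(0, u)]" using assms(3) by (simp add: args_ok_def)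
  have "\<psi> [(sG c a + b, u)] = c * \<psi> [(a, u)] + \<psi> [(b, u)]" for c a b
    using conjunct1[OF assms(2)[unfolded rel_cochain_def], rule_format, OF ok, of 0] by simp
  from this[of 1 0 0] show ?thesis by simp
qed

lemma ce_diff_two: "ce_diff br \<psi> [(a0, u0), (a1, u1)] = - \<psi> [(br a0 a1, u0 * u1)]"
  by (simp add: ce_diff_def del2_def numeral_2_eq_2 lessThan_Suc)

lemma tensor_cochain_not_coboundary:
  assumes "vector_space sG" "rel_cochain sG br sA S 1 \<psi>"
    and "br a a = 0" "B a a \<noteq> 0"
    and "p \<in> S" "q \<in> S" "p * q \<in> S" "D p q \<noteq> 0"
  shows "\<exists>zs. args_ok S 2 zs \<and> tensor_cochain B D zs \<noteq> ce_diff br \<psi> zs"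
proof (intro exI conjI)
  show "args_ok S 2 [(a, p), (a, q)]" using assms(5,6) by (simp add: args_ok_def)
  have "ce_diff br \<psi> [(a, p), (a, q)] = 0"
    using rel_cochain_1_zero_slot[OF assms(1,2,7)] assms(3) by (simp add: ce_diff_two)
  then show "tensor_cochain B D [(a, p), (a, q)] \<noteq> ce_diff br \<psi> [(a, p), (a, q)]"
    using assms(4,8) by (simp add: tensor_cochain_def)
qed

locale killing_orthonormal_basis =
  fd_lie_algebra sG br + dual_basis sG n e estar
  for sG :: "complex \<Rightarrow> 'g::ab_group_add \<Rightarrow> 'g" and br n e estar +
  assumes killing_orthonormal:
    "i < n \<Longrightarrow> j < n \<Longrightarrow> killing sG br (e i) (e j) = (if i = j then 1 else 0)"
begin

lemma killing_dual_coordinates: "killing sG br a b = (\<Sum>i<n. estar i a * estar i b)"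
proof -
  have K_basis: "killing sG br (e i) b = estar i b" if i: "i < n" for i
  proof -
    interpret r: Vector_Spaces.linear sG "(*)" "\<lambda>b. killing sG br b (e i)"
      by (rule killing_linear_left)
    have "killing sG br (e i) b = killing sG br (\<Sum>j<n. sG (estar j b) (e j)) (e i)"
      by (subst dual_basis_expansion[of b]) (simp add: killing_sym)
    also have "\<dots> = (\<Sum>j<n. estar j b * killing sG br (e j) (e i))" by (simp add: r.sum r.scale)
    also have "\<dots> = (\<Sum>j<n. if j = i then estar i b else 0)"
      using i by (intro sum.cong) (auto simp: killing_orthonormal)
    finally show ?thesis using i by simp
  qed
  interpret l: Vector_Spaces.linear sG "(*)" "\<lambda>a. killing sG br a b" by (rule killing_linear_left)
  have "killing sG br a b = killing sG br (\<Sum>i<n. sG (estar i a) (e i)) b"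
    by (subst dual_basis_expansion[of a]) simp
  also have "\<dots> = (\<Sum>i<n. estar i a * killing sG br (e i) b)" by (simp add: l.sum l.scale)
  also have "\<dots> = (\<Sum>i<n. estar i a * estar i b)" by (simp add: K_basis)
  finally show ?thesis .
qed

lemma phi_xy_eq_tensor_cochain:
  "phi_xy n estar x y = tensor_cochain (killing sG br) (wedge_pair x y)"
proof
  fix zs :: "('g \<times> 'a) list"
  show "phi_xy n estar x y zs = tensor_cochain (killing sG br) (wedge_pair x y) zs"
    unfolding phi_xy_def wedge1_def tens_fun_def tensor_cochain_def wedge_pair_def
      killing_dual_coordinates sum_distrib_right
    by (intro sum.cong) (auto simp: algebra_simps)
qed

end

theorem lemma4p14:
  fixes sG :: "complex \<Rightarrow> 'g::ab_group_add \<Rightarrow> 'g"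
    and br :: "'g \<Rightarrow> 'g \<Rightarrow> 'g"
    and sA :: "complex \<Rightarrow> 'a::comm_ring_1 \<Rightarrow> 'a"
    and Agr :: "nat \<Rightarrow> 'a set"
    and x y :: "'a \<Rightarrow> complex"
    and n :: nat and e :: "nat \<Rightarrow> 'g" and estar :: "nat \<Rightarrow> 'g \<Rightarrow> complex"
  assumes ss: "semisimple sG br"
    and gr: "graded_comm_algebra sA Agr"
    and xlin: "linear_on sA (aug_ideal sA Agr) x"
    and ylin: "linear_on sA (aug_ideal sA Agr) y"
    and xsq: "\<forall>p\<in>aug_ideal sA Agr. \<forall>q\<in>aug_ideal sA Agr. x (p * q) = 0"
    and ysq: "\<forall>p\<in>aug_ideal sA Agr. \<forall>q\<in>aug_ideal sA Agr. y (p * q) = 0"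
    and xyind: "\<forall>c d. (\<forall>p\<in>aug_ideal sA Agr. c * x p + d * y p = 0) \<longrightarrow> c = 0 \<and> d = 0"
    and ebasis: "inj_on e {..<n}" "\<not> module.dependent sG (e ` {..<n})"
      "module.span sG (e ` {..<n}) = UNIV"
    and eorth: "\<forall>i<n. \<forall>j<n. killing sG br (e i) (e j) = (if i = j then 1 else 0)"
    and edual: "\<forall>i<n. Vector_Spaces.linear sG (*) (estar i)"
      "\<forall>i<n. \<forall>j<n. estar i (e j) = (if i = j then 1 else 0)"
  shows "rel_cochain sG br sA (aug_ideal sA Agr) 2 (phi_xy n estar x y) \<and>
         (\<forall>zs. args_ok (aug_ideal sA Agr) 3 zs \<longrightarrow> ce_diff br (phi_xy n estar x y) zs = 0) \<and>
         \<not> (\<exists>\<psi>. rel_cochain sG br sA (aug_ideal sA Agr) 1 \<psi> \<and>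
               (\<forall>zs. args_ok (aug_ideal sA Agr) 2 zs \<longrightarrow>
                      phi_xy n estar x y zs = ce_diff br \<psi> zs))"
proof -
  let ?S = "aug_ideal sA Agr"
  let ?\<phi> = "phi_xy n estar x y"
  have lie: "lie_algebra sG br" and fd: "fin_dim sG" and nontrivial: "(UNIV :: 'g set) \<noteq> {0}"
    using ss unfolding semisimple_def by auto
  \<comment> \<open>The independence hypothesis ebasis(2) is implied by the dual functionals and not needed.\<close>
  interpret killing_orthonormal_basis sG br n e estar
  proof (intro killing_orthonormal_basis.intro fd_lie_algebraI[OF lie fd] dual_basis.intro
      killing_orthonormal_basis_axioms.intro dual_basis_axioms.intro)
  qed (simp_all add: conjunct1[OF lie[unfolded lie_algebra_def]] ebasis(1,3) eorth edual)
  have \<phi>_eq: "?\<phi> = tensor_cochain (killing sG br) (wedge_pair x y)"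
    by (rule phi_xy_eq_tensor_cochain)
  have cochain: "rel_cochain sG br sA ?S 2 ?\<phi>"
    unfolding \<phi>_eq
    by (rule rel_cochain_tensor_cochain[where B = "killing sG br" and D = "wedge_pair x y",
          OF killing_scale_add_left killing_sym killing_invariant
          wedge_pair_scale_add_left[OF xlin ylin] wedge_pair_alt])
  have cocycle: "ce_diff br ?\<phi> zs = 0" if "args_ok ?S 3 zs" for zs
    unfolding \<phi>_eq
    by (rule ce_diff_tensor_cochain_eq_0[where D = "wedge_pair x y",
          OF wedge_pair_mult_left[OF xsq ysq] that])
  have not_coboundary: "\<exists>zs. args_ok ?S 2 zs \<and> ?\<phi> zs \<noteq> ce_diff br \<psi> zs"
    if \<psi>: "rel_cochain sG br sA ?S 1 \<psi>" for \<psi>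
  proof -
    obtain p q where pq: "p \<in> ?S" "q \<in> ?S" "wedge_pair x y p q \<noteq> 0"
      using wedge_pair_nonzero[OF xyind] .
    have "0 < n" using dual_basis_nonempty[OF nontrivial] .
    then have "killing sG br (e 0) (e 0) \<noteq> 0" by (simp add: killing_orthonormal)
    from tensor_cochain_not_coboundary[where B = "killing sG br" and D = "wedge_pair x y",
        OF vector_space_axioms \<psi> bracket_self[of "e 0"] this pq(1,2)
        aug_ideal_mult_closed[OF gr pq(1,2)] pq(3)]
    show ?thesis unfolding \<phi>_eq .
  qed
  show ?thesis using cochain cocycle not_coboundary by fast
qed

end
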